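(* Consider two spacecraft $i=1,2$ together with an assigned third spacecraft $3$, with the notation of the context (edge $(1,2)$, $\rho(1,2)=\rho(2,1)=3$). Let $k^\alpha_{12},k^\beta_{12}>0$ with $k^\alpha_{12}\neq k^\beta_{12}$, and set $k^\alpha_{21}=k^\alpha_{12}$ and $k^\beta_{21}=k^\beta_{12}$. Define $$\Psi_{12}=k^\alpha_{12}\Psi^\alpha_{12}+k^\beta_{12}\Psi^\beta_{12},\quad e_{12}=k^\alpha_{12}e^\alpha_{12}+k^\beta_{12}e^\beta_{12},\quad e_{21}=k^\alpha_{21}e^\alpha_{21}+k^\beta_{21}e^\beta_{21}.$$ Then, along any trajectory of the kinematics $\dot R_i=R_i\hat\Omega_i$ ($i=1,2$): (i) $e_{12}=-Q^d_{21}e_{21}$, and hence $\|e_{12}\|=\|e_{21}\|$. (ii) $\frac{d}{dt}\Psi_{12}=e_{12}\cdot e_{\Omega_1}+e_{21}\cdot e_{\Omega_2}$. (iii) $\|\dot e_{12}\|\le (k^\alpha_{12}+k^\beta_{12})(\|e_{\Omega_1}\|+\|e_{\Omega_2}\|)+B^d\|e_{12}\|$ and $\|\dot e_{21}\|\le (k^\alpha_{12}+k^\beta_{12})(\|e_{\Omega_1}\|+\|e_{\Omega_2}\|)+B^d\|e_{21}\|$. (iv) If $\Psi_{12}\le\psi<2\min\{k^\alpha_{12},k^\beta_{12}\}$ for a constant $\psi$, then $$\underline\psi_{12}\|e_{12}\|^2\le\Psi_{12}\le\overline\psi_{12}\|e_{12}\|^2,$$ where $$\underline\psi_{12}=\frac{\min\{k^\alpha_{12},k^\beta_{12}\}}{2\max\{(k^\alpha_{12})^2,(k^\beta_{12})^2,(k^\alpha_{12}-k^\beta_{12})^2\}+2(k^\alpha_{12}+k^\beta_{12})^2},$$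 $$\overline\psi_{12}=\frac{\min\{k^\alpha_{12},k^\beta_{12}\}\,(k^\alpha_{12}+k^\beta_{12})}{\min\{(k^\alpha_{12})^2,(k^\beta_{12})^2\}\,\bigl(2\min\{k^\alpha_{12},k^\beta_{12}\}-\psi\bigr)}.$$
   Context: Notation: $\mathsf{SO}(3)=\{R\in\mathbb{R}^{3\times3}: R^TR=I,\ \det R=1\}$. The hat map $\hat{\cdot}:\mathbb{R}^3\to\mathfrak{so}(3)$ is defined by $\hat x y=x\times y$. $\|\cdot\|$ is the Euclidean norm, and $x\cdot y=x^Ty$. Spacecraft $i$ is a rigid body with attitude $R_i(t)\in\mathsf{SO}(3)$, which maps body-frame to inertial-frame coordinates. Its body angular velocity is $\Omega_i(t)\in\mathbb{R}^3$, and $\dot R_i=R_i\hat\Omega_i$. The spacecraft positions $p_i\in\mathbb{R}^3$ are fixed in the inertial frame. Set $s_{ij}=(p_j-p_i)/\|p_j-p_i\|$; these are constant unit vectors with $s_{ji}=-s_{ij}$. The line-of-sight measurement of spacecraft $j$ from spacecraft $i$, expressed in the body frame of $i$, is $b_{ij}=R_i^Ts_{ij}$. Set $b_{ijk}=b_{ij}\times b_{ik}$ and $s_{ijk}=s_{ij}\times s_{ik}$. The relative attitude is $Q_{ij}=R_j^TR_i$. For an edge $(i,j)$, a third spacecraft $k=\rho(i,j)=\rho(j,i)$ is assigned, with $p_i,p_j,p_k$ not collinear. Put $a_{ij}=a_{ji}=\|b_{ijk}\|\,\|b_{jik}\|$; this is a nonzero constant. A desired relative attitude $Q^d_{ij}:[0,\infty)\to\mathsf{SO}(3)$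 is smooth, with $\dot Q^d_{ij}=Q^d_{ij}\hat\Omega^d_{ij}$ and $Q^d_{ji}=(Q^d_{ij})^T$. Desired absolute angular velocities $\Omega^d_i(t)$ are $C^1$ functions chosen so that $\Omega^d_{ij}=\Omega^d_i-Q^d_{ji}\Omega^d_j$ for each edge, and $\|\Omega^d_i(t)\|\le B^d$ for all $t\ge0$, for a known constant $B^d>0$. The angular velocity error is $e_{\Omega_i}=\Omega_i-\Omega^d_i$. Error variables for $(i,j,k)$ with $k=\rho(i,j)$: $\Psi^\alpha_{ij}=1+b_{ji}\cdot Q^d_{ij}b_{ij}$, $\Psi^\beta_{ij}=1+\frac{1}{a_{ij}}\,b_{jik}\cdot Q^d_{ij}b_{ijk}$, $e^\alpha_{ij}=(Q^d_{ji}b_{ji})\times b_{ij}$, $e^\beta_{ij}=\frac{1}{a_{ij}}(Q^d_{ji}b_{jik})\times b_{ijk}$. With gains $k^\alpha_{ij}=k^\alpha_{ji}>0$ and $k^\beta_{ij}=k^\beta_{ji}>0$, set $\Psi_{ij}=k^\alpha_{ij}\Psi^\alpha_{ij}+k^\beta_{ij}\Psi^\beta_{ij}$ and $e_{ij}=k^\alpha_{ij}e^\alpha_{ij}+k^\beta_{ij}e^\beta_{ij}$. *)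

theory Defs
  imports "HOL-Analysis.Analysis"
begin

definition SO3 :: "(real^3^3) set" where
  "SO3 = {R. transpose R ** R = mat 1 \<and> det R = 1}"

definition hat :: "real^3 \<Rightarrow> real^3^3" where
  "hat x = matrix (\<lambda>y. cross3 x y)"

definition sdir :: "real^3 \<Rightarrow> real^3 \<Rightarrow> real^3" where
  "sdir p q = (1 / norm (q - p)) *\<^sub>R (q - p)"

definition bvec :: "real^3^3 \<Rightarrow> real^3 \<Rightarrow> real^3" where
  "bvec R s = transpose R *v s"

definition a_coef :: "real^3^3 \<Rightarrow> real^3^3 \<Rightarrow> real^3 \<Rightarrow> real^3 \<Rightarrow> real^3 \<Rightarrow> real^3 \<Rightarrow> real" where
  "a_coef Ri Rj sij sik sji sjk =
     norm (cross3 (bvec Ri sij) (bvec Ri sik)) * norm (cross3 (bvec Rj sji) (bvec Rj sjk))"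

definition Psi_alpha :: "real^3^3 \<Rightarrow> real^3^3 \<Rightarrow> real^3^3 \<Rightarrow> real^3 \<Rightarrow> real^3 \<Rightarrow> real" where
  "Psi_alpha Ri Rj Q sij sji = 1 + (bvec Rj sji) \<bullet> (Q *v bvec Ri sij)"

definition Psi_beta :: "real^3^3 \<Rightarrow> real^3^3 \<Rightarrow> real^3^3 \<Rightarrow> real^3 \<Rightarrow> real^3 \<Rightarrow> real^3 \<Rightarrow> real^3 \<Rightarrow> real" where
  "Psi_beta Ri Rj Q sij sik sji sjk =
     1 + (1 / a_coef Ri Rj sij sik sji sjk) *
         ((cross3 (bvec Rj sji) (bvec Rj sjk)) \<bullet> (Q *v cross3 (bvec Ri sij) (bvec Ri sik)))"

text \<open>e^alpha_ij = (Q^d_ji b_ji) x b_ij, with Q^d_ji = transpose Q.\<close>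
definition e_alpha :: "real^3^3 \<Rightarrow> real^3^3 \<Rightarrow> real^3^3 \<Rightarrow> real^3 \<Rightarrow> real^3 \<Rightarrow> real^3" where
  "e_alpha Ri Rj Q sij sji = cross3 (transpose Q *v bvec Rj sji) (bvec Ri sij)"

definition e_beta :: "real^3^3 \<Rightarrow> real^3^3 \<Rightarrow> real^3^3 \<Rightarrow> real^3 \<Rightarrow> real^3 \<Rightarrow> real^3 \<Rightarrow> real^3 \<Rightarrow> real^3" where
  "e_beta Ri Rj Q sij sik sji sjk =
     (1 / a_coef Ri Rj sij sik sji sjk) *\<^sub>R
       cross3 (transpose Q *v cross3 (bvec Rj sji) (bvec Rj sjk)) (cross3 (bvec Ri sij) (bvec Ri sik))"

definition Psi_pair where
  "Psi_pair ka kb Ri Rj Q sij sik sji sjk =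
     ka * Psi_alpha Ri Rj Q sij sji + kb * Psi_beta Ri Rj Q sij sik sji sjk"

definition e_pair where
  "e_pair ka kb Ri Rj Q sij sik sji sjk =
     ka *\<^sub>R e_alpha Ri Rj Q sij sji + kb *\<^sub>R e_beta Ri Rj Q sij sik sji sjk"

end

theory Submission
  imports Defs
begin

text \<open>With \<open>u\<^sub>1 = s\<^sub>1\<^sub>2\<close> and \<open>u\<^sub>2\<close> the unit normal of the triangle, both the \<open>\<alpha>\<close>- and the
  \<open>\<beta>\<close>-terms are instances of one line-of-sight potential \<open>1 - (R\<^sub>2\<^sup>T u) \<bullet> Q (R\<^sub>1\<^sup>T u)\<close> and error
  \<open>(R\<^sub>1\<^sup>T u) \<times> Q\<^sup>T (R\<^sub>2\<^sup>T u)\<close>, because \<open>s\<^sub>2\<^sub>1 = - s\<^sub>1\<^sub>2\<close> and the two measured normals are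
  antiparallel. Part (i) is the invariance of the cross product under rotations. For (ii) and
  (iii), \<open>R\<^sub>1\<^sup>T u\<close> and \<open>Q\<^sup>T R\<^sub>2\<^sup>T u\<close> are rotating vectors, \<open>X' = X \<times> W\<close>, and the relation
  \<open>\<Omega>\<^sup>d\<^sub>1\<^sub>2 = \<Omega>\<^sup>d\<^sub>1 - Q\<^sup>T \<Omega>\<^sup>d\<^sub>2\<close> together with the Jacobi identity leaves only the angular velocity
  errors plus a rotation of the error by \<open>\<Omega>\<^sup>d\<^sub>1\<close>. For (iv), with \<open>N = R\<^sub>1 Q\<^sup>T R\<^sub>2\<^sup>T\<close> the potential
  is \<open>k\<^sub>\<alpha> (1 - u\<^sub>1 \<bullet> N u\<^sub>1) + k\<^sub>\<beta> (1 - u\<^sub>2 \<bullet> N u\<^sub>2)\<close> and the error is a rotation of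
  \<open>k\<^sub>\<alpha> u\<^sub>1 \<times> N u\<^sub>1 + k\<^sub>\<beta> u\<^sub>2 \<times> N u\<^sub>2\<close>. The lower bound is Cauchy-Schwarz; for the upper bound both
  sides become polynomials in the entries of \<open>N\<close> in the frame \<open>u\<^sub>1, u\<^sub>2, u\<^sub>1 \<times> u\<^sub>2\<close>, and the
  quaternion identities for these entries give the estimate.\<close>

text \<open>Keep \<open>transpose R *v x\<close> from being rewritten into \<open>x v* R\<close>.\<close>
declare transpose_matrix_vector[simp del] vector_transpose_matrix[simp del]

section \<open>Rotations\<close>

lemma rotation_matrix_SO3: "R \<in> SO3 \<Longrightarrow> rotation_matrix R"
  unfolding SO3_def rotation_matrix_def by (simp add: orthogonal_matrix)

lemma rotation_matrix_transpose: "rotation_matrix R \<Longrightarrow> rotation_matrix (transpose R)"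
  unfolding rotation_matrix_def by (simp add: det_transpose)

lemma rotation_matrix_mul:
  fixes A B :: "real^'n^'n"
  shows "rotation_matrix A \<Longrightarrow> rotation_matrix B \<Longrightarrow> rotation_matrix (A ** B)"
  unfolding rotation_matrix_def using orthogonal_matrix_mul by (auto simp: det_mul)

lemma rotation_transpose_mult_vector:
  "rotation_matrix R \<Longrightarrow> transpose R *v (R *v x) = x"
  "rotation_matrix R \<Longrightarrow> R *v (transpose R *v x) = x"
  unfolding rotation_matrix_def orthogonal_matrix_def by (simp_all add: matrix_vector_mul_assoc)

lemma inner_matrix_vector_transpose: "(x::real^'n) \<bullet> (A *v y) = (transpose A *v x) \<bullet> y"
  by (metis dot_lmul_matrix inner_commute transpose_matrix_vector transpose_transpose)

lemma matrix_vector_mult_minus_right: "A *v (- x) = - (A *v (x::real^'n))"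
  using linear_neg[OF matrix_vector_mul_linear] by blast

lemma rotation_inner: "rotation_matrix R \<Longrightarrow> (R *v x) \<bullet> (R *v y) = (x::real^3) \<bullet> y"
  by (simp add: inner_matrix_vector_transpose[of "R *v x"] rotation_transpose_mult_vector)

lemma rotation_norm: "rotation_matrix R \<Longrightarrow> norm (R *v x) = norm (x::real^3)"
  by (simp add: norm_eq_sqrt_inner rotation_inner)

lemma rotation_cross3: "rotation_matrix R \<Longrightarrow> R *v cross3 x y = cross3 (R *v x) (R *v y)"
  by (simp add: cross_rotation_matrix)

lemma norm_cross3_le: "norm (cross3 x y) \<le> norm x * norm y"
proof -
  have "(norm (cross3 x y))\<^sup>2 \<le> (norm x * norm y)\<^sup>2"
    using norm_cross_dot[of x y] by (smt (verit) zero_le_power2)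
  then show ?thesis by (rule power2_le_imp_le) simp
qed

lemma hat_mult_vector: "hat x *v y = cross3 x y"
proof -
  have "linear (cross3 x)" using bilinear_cross by (simp add: bilinear_def)
  then show ?thesis unfolding hat_def by (simp add: matrix_works)
qed

lemma transpose_hat_mult_vector: "transpose (hat x) *v y = cross3 y x"
  unfolding hat_def matrix_def transpose_def
  by (simp add: vec_eq_iff forall_3 cross3_simps axis_def matrix_vector_mult_def sum_3)

lemma bvec_scaleR: "bvec R (c *\<^sub>R x) = c *\<^sub>R bvec R x"
  by (simp add: bvec_def matrix_vector_mult_scaleR)

lemma bvec_minus: "bvec R (- x) = - bvec R x"
  by (simp add: bvec_def matrix_vector_mult_minus_right)

lemma bvec_cross3: "rotation_matrix R \<Longrightarrow> cross3 (bvec R x) (bvec R y) = bvec R (cross3 x y)"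
  by (simp add: bvec_def rotation_cross3 rotation_matrix_transpose)

lemma norm_bvec: "rotation_matrix R \<Longrightarrow> norm (bvec R s) = norm s"
  by (simp add: bvec_def rotation_norm rotation_matrix_transpose)

section \<open>Rotating vectors\<close>

lemma bounded_bilinear_matrix_vector_mult:
  "bounded_bilinear ((*v) :: real^'n^'m \<Rightarrow> real^'n \<Rightarrow> real^'m)"
  unfolding bilinear_conv_bounded_bilinear[symmetric] bilinear_def
  by (auto simp: linear_iff matrix_vector_right_distrib matrix_vector_mult_add_rdistrib
      matrix_vector_mult_scaleR scaleR_matrix_vector_assoc)

lemma bounded_linear_transpose: "bounded_linear (transpose :: real^'n^'m \<Rightarrow> real^'m^'n)"
  unfolding linear_conv_bounded_linear[symmetric]
  by (auto simp: linear_iff transpose_def vec_eq_iff)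

lemma bounded_bilinear_cross3: "bounded_bilinear cross3"
  using bilinear_cross bilinear_conv_bounded_bilinear by blast

lemma has_vector_derivative_bvec:
  assumes "(R has_vector_derivative R t ** hat W) (at t within S)"
  shows "((\<lambda>\<tau>. bvec (R \<tau>) s) has_vector_derivative cross3 (bvec (R t) s) W) (at t within S)"
proof -
  have "((\<lambda>\<tau>. transpose (R \<tau>) *v s) has_vector_derivative transpose (R t ** hat W) *v s) (at t within S)"
    using bounded_bilinear.has_vector_derivative[OF bounded_bilinear_matrix_vector_mult
        bounded_linear.has_vector_derivative[OF bounded_linear_transpose assms]
        has_vector_derivative_const[of s]]
    by simp
  moreover have "transpose (R t ** hat W) *v s = cross3 (bvec (R t) s) W"
    by (simp add: matrix_transpose_mul matrix_vector_mul_assoc[symmetric]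
        transpose_hat_mult_vector bvec_def)
  ultimately show ?thesis by (simp add: bvec_def)
qed

lemma has_vector_derivative_transpose_mult_rotating:
  assumes Q: "(Q has_vector_derivative Q t ** hat WQ) (at t within S)"
    and Z: "(Z has_vector_derivative cross3 (Z t) W) (at t within S)"
    and rot: "rotation_matrix (Q t)"
  shows "((\<lambda>\<tau>. transpose (Q \<tau>) *v Z \<tau>) has_vector_derivative
           cross3 (transpose (Q t) *v Z t) (WQ + transpose (Q t) *v W)) (at t within S)"
proof -
  have "((\<lambda>\<tau>. transpose (Q \<tau>) *v Z \<tau>) has_vector_derivative
          transpose (Q t) *v cross3 (Z t) W + transpose (Q t ** hat WQ) *v Z t) (at t within S)"
    by (rule bounded_bilinear.has_vector_derivative[OF bounded_bilinear_matrix_vector_mult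
          bounded_linear.has_vector_derivative[OF bounded_linear_transpose Q] Z])
  moreover have "transpose (Q t) *v cross3 (Z t) W + transpose (Q t ** hat WQ) *v Z t
      = cross3 (transpose (Q t) *v Z t) (WQ + transpose (Q t) *v W)"
    by (simp add: rotation_cross3[OF rotation_matrix_transpose[OF rot]] matrix_transpose_mul
        matrix_vector_mul_assoc[symmetric] transpose_hat_mult_vector cross_add_right)
  ultimately show ?thesis by simp
qed

lemma has_real_derivative_inner_rotating:
  assumes "(X has_vector_derivative cross3 (X t) W) (at t within S)"
    and "(Y has_vector_derivative cross3 (Y t) V) (at t within S)"
  shows "((\<lambda>\<tau>. Y \<tau> \<bullet> X \<tau>) has_real_derivative cross3 (X t) (Y t) \<bullet> (V - W)) (at t within S)"
proof -
  have "((\<lambda>\<tau>. Y \<tau> \<bullet> X \<tau>) has_vector_derivative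
          Y t \<bullet> cross3 (X t) W + cross3 (Y t) V \<bullet> X t) (at t within S)"
    by (rule bounded_bilinear.has_vector_derivative[OF bounded_bilinear_inner assms(2,1)])
  moreover have "Y t \<bullet> cross3 (X t) W + cross3 (Y t) V \<bullet> X t = cross3 (X t) (Y t) \<bullet> (V - W)"
    unfolding cross3_def inner_vec_def sum_3 by (simp add: algebra_simps)
  ultimately show ?thesis by (simp add: has_real_derivative_iff_has_vector_derivative)
qed

lemma has_vector_derivative_cross_rotating:
  assumes "(X has_vector_derivative cross3 (X t) W) (at t within S)"
    and "(Y has_vector_derivative cross3 (Y t) V) (at t within S)"
  shows "((\<lambda>\<tau>. cross3 (X \<tau>) (Y \<tau>)) has_vector_derivative
           cross3 (cross3 (X t) (W - U)) (Y t) + cross3 (X t) (cross3 (Y t) (V - U))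
           + cross3 (cross3 (X t) (Y t)) U) (at t within S)"
proof -
  have "((\<lambda>\<tau>. cross3 (X \<tau>) (Y \<tau>)) has_vector_derivative
          cross3 (X t) (cross3 (Y t) V) + cross3 (cross3 (X t) W) (Y t)) (at t within S)"
    by (rule bounded_bilinear.has_vector_derivative[OF bounded_bilinear_cross3 assms])
  moreover have "cross3 (X t) (cross3 (Y t) V) + cross3 (cross3 (X t) W) (Y t)
      = cross3 (cross3 (X t) (W - U)) (Y t) + cross3 (X t) (cross3 (Y t) (V - U))
        + cross3 (cross3 (X t) (Y t)) U"
    unfolding cross3_def by (simp add: vec_eq_iff forall_3 algebra_simps)
  ultimately show ?thesis by simp
qed

lemma has_vector_derivative_transpose_rotation:
  assumes Q: "(Q has_vector_derivative Q t ** hat WQ) (at t within S)"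
    and rot: "rotation_matrix (Q t)" and WQ: "WQ = Wa - transpose (Q t) *v Wb"
  shows "((\<lambda>\<tau>. transpose (Q \<tau>)) has_vector_derivative transpose (Q t) ** hat (Wb - Q t *v Wa))
           (at t within S)"
proof -
  have "transpose (Q t ** hat WQ) = transpose (Q t) ** hat (Wb - Q t *v Wa)"
    unfolding matrix_eq
  proof
    fix x
    have "Wb - Q t *v Wa = - (Q t *v WQ)"
      by (simp add: WQ matrix_vector_mult_diff_distrib rotation_transpose_mult_vector(2)[OF rot])
    then show "transpose (Q t ** hat WQ) *v x = (transpose (Q t) ** hat (Wb - Q t *v Wa)) *v x"
      using rotation_cross3[OF rotation_matrix_transpose[OF rot], of "Q t *v WQ"]
      by (simp add: matrix_transpose_mul matrix_vector_mul_assoc[symmetric] transpose_hat_mult_vector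
          hat_mult_vector rotation_transpose_mult_vector(1)[OF rot] cross_skew[of WQ]
          matrix_vector_mult_minus_right)
  qed
  then show ?thesis
    using bounded_linear.has_vector_derivative[OF bounded_linear_transpose Q] by simp
qed

lemma has_vector_derivative_weighted_rotating_sum:
  assumes f: "(f has_vector_derivative p + cross3 (f t) W) F"
    and g: "(g has_vector_derivative q + cross3 (g t) W) F"
    and "norm p \<le> n" "norm q \<le> n" "0 \<le> a" "0 \<le> b" "norm W \<le> B"
  shows "\<exists>v. ((\<lambda>\<tau>. a *\<^sub>R f \<tau> + b *\<^sub>R g \<tau>) has_vector_derivative v) F
           \<and> norm v \<le> (a + b) * n + B * norm (a *\<^sub>R f t + b *\<^sub>R g t)"
proof (intro exI conjI)
  let ?e = "a *\<^sub>R f t + b *\<^sub>R g t"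
  show "((\<lambda>\<tau>. a *\<^sub>R f \<tau> + b *\<^sub>R g \<tau>) has_vector_derivative
          (a *\<^sub>R p + b *\<^sub>R q) + cross3 ?e W) F"
    using has_vector_derivative_add[OF
        bounded_linear.has_vector_derivative[OF bounded_linear_scaleR_right f]
        bounded_linear.has_vector_derivative[OF bounded_linear_scaleR_right g]]
    by (simp add: cross_add_left cross_mult_left algebra_simps)
  have "norm (a *\<^sub>R p + b *\<^sub>R q) \<le> a * n + b * n"
    using assms(3-6) by (intro norm_triangle_le add_mono) (simp_all add: mult_left_mono)
  moreover have "norm (cross3 ?e W) \<le> B * norm ?e"
    using norm_cross3_le[of ?e W] mult_right_mono[OF assms(7) norm_ge_zero[of ?e]] by (simp add: mult.commute)
  ultimately show "norm ((a *\<^sub>R p + b *\<^sub>R q) + cross3 ?e W) \<le> (a + b) * n + B * norm ?e"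
    by (intro norm_triangle_le) (simp add: algebra_simps)
qed

section \<open>Line-of-sight potential and error\<close>

text \<open>For \<open>u = s\<^sub>i\<^sub>j = - s\<^sub>j\<^sub>i\<close> these are \<open>\<Psi>\<^sup>\<alpha>\<^sub>i\<^sub>j\<close> and \<open>e\<^sup>\<alpha>\<^sub>i\<^sub>j\<close>; since \<open>s\<^sub>j\<^sub>i \<times> s\<^sub>j\<^sub>k\<close> is a negative
  multiple of \<open>s\<^sub>i\<^sub>j \<times> s\<^sub>i\<^sub>k\<close>, \<open>\<Psi>\<^sup>\<beta>\<^sub>i\<^sub>j\<close> and \<open>e\<^sup>\<beta>\<^sub>i\<^sub>j\<close> are the same quantities for \<open>u\<close> the unit normal
  of the triangle.\<close>
definition los_potential :: "real^3^3 \<Rightarrow> real^3^3 \<Rightarrow> real^3^3 \<Rightarrow> real^3 \<Rightarrow> real" where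
  "los_potential Ri Rj Q u = 1 - bvec Rj u \<bullet> (Q *v bvec Ri u)"

definition los_error :: "real^3^3 \<Rightarrow> real^3^3 \<Rightarrow> real^3^3 \<Rightarrow> real^3 \<Rightarrow> real^3" where
  "los_error Ri Rj Q u = cross3 (bvec Ri u) (transpose Q *v bvec Rj u)"

lemma los_error_swap:
  assumes "rotation_matrix Q"
  shows "los_error Ri Rj Q u = - (transpose Q *v los_error Rj Ri (transpose Q) u)"
  using rotation_cross3[OF rotation_matrix_transpose[OF assms]]
  by (simp add: los_error_def rotation_transpose_mult_vector(1)[OF assms] cross_skew[of "bvec Ri u"])

lemma los_error_minus: "los_error Ri Rj Q (- u) = los_error Ri Rj Q u"
  by (simp add: los_error_def bvec_minus matrix_vector_mult_minus_right)

lemma Psi_pair_eq_los_potential: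
  assumes rot: "rotation_matrix Ri" "rotation_matrix Rj"
    and sji: "sji = - sij" and w: "cross3 sij sik \<noteq> 0"
    and w': "cross3 sji sjk = - \<mu> *\<^sub>R cross3 sij sik" and \<mu>: "\<mu> > 0"
  shows "Psi_pair ka kb Ri Rj Q sij sik sji sjk
    = ka * los_potential Ri Rj Q sij + kb * los_potential Ri Rj Q (sgn (cross3 sij sik))"
proof -
  let ?w = "cross3 sij sik"
  have a: "a_coef Ri Rj sij sik sji sjk = \<mu> * (norm ?w)\<^sup>2"
    using \<mu> by (simp add: a_coef_def bvec_cross3 rot w' norm_bvec power2_eq_square)
  have "Psi_beta Ri Rj Q sij sik sji sjk = los_potential Ri Rj Q (sgn ?w)"
    using \<mu> w
    by (simp add: Psi_beta_def los_potential_def a bvec_cross3 rot w' bvec_scaleR bvec_minus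
        sgn_div_norm matrix_vector_mult_scaleR power2_eq_square field_simps)
  then show ?thesis
    by (simp add: Psi_pair_def Psi_alpha_def los_potential_def sji bvec_minus)
qed

lemma e_pair_eq_los_error:
  assumes rot: "rotation_matrix Ri" "rotation_matrix Rj"
    and sji: "sji = - sij" and w: "cross3 sij sik \<noteq> 0"
    and w': "cross3 sji sjk = - \<mu> *\<^sub>R cross3 sij sik" and \<mu>: "\<mu> > 0"
  shows "e_pair ka kb Ri Rj Q sij sik sji sjk
    = ka *\<^sub>R los_error Ri Rj Q sij + kb *\<^sub>R los_error Ri Rj Q (sgn (cross3 sij sik))"
proof -
  let ?w = "cross3 sij sik"
  have a: "a_coef Ri Rj sij sik sji sjk = \<mu> * (norm ?w)\<^sup>2"
    using \<mu> by (simp add: a_coef_def bvec_cross3 rot w' norm_bvec power2_eq_square)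
  have "e_beta Ri Rj Q sij sik sji sjk = los_error Ri Rj Q (sgn ?w)"
    using \<mu> w
    by (simp add: e_beta_def los_error_def a bvec_cross3 rot w' bvec_scaleR bvec_minus
        sgn_div_norm matrix_vector_mult_scaleR matrix_vector_mult_minus_right cross_mult_left
        cross_mult_right cross_skew[of "bvec Ri ?w"] power2_eq_square divide_inverse)
  then show ?thesis
    by (simp add: e_pair_def e_alpha_def los_error_def sji bvec_minus matrix_vector_mult_minus_right
        cross_skew[of "bvec Ri sij"])
qed

lemma has_real_derivative_los_potential:
  assumes R1: "(R1 has_vector_derivative R1 t ** hat W1) (at t within S)"
    and R2: "(R2 has_vector_derivative R2 t ** hat W2) (at t within S)"
    and Q: "(Q has_vector_derivative Q t ** hat WQ) (at t within S)"
    and rot: "rotation_matrix (Q t)" and WQ: "WQ = Wa - transpose (Q t) *v Wb"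
  shows "((\<lambda>\<tau>. los_potential (R1 \<tau>) (R2 \<tau>) (Q \<tau>) u) has_real_derivative
           los_error (R1 t) (R2 t) (Q t) u \<bullet> (W1 - Wa)
           + los_error (R2 t) (R1 t) (transpose (Q t)) u \<bullet> (W2 - Wb)) (at t within S)"
proof -
  define X where "X \<tau> = bvec (R1 \<tau>) u" for \<tau>
  define Y where "Y \<tau> = transpose (Q \<tau>) *v bvec (R2 \<tau>) u" for \<tau>
  have "((\<lambda>\<tau>. Y \<tau> \<bullet> X \<tau>) has_real_derivative
          cross3 (X t) (Y t) \<bullet> (WQ + transpose (Q t) *v W2 - W1)) (at t within S)"
    unfolding X_def Y_def
    by (intro has_real_derivative_inner_rotating has_vector_derivative_bvec R1
        has_vector_derivative_transpose_mult_rotating[OF Q _ rot] R2)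
  moreover have "los_potential (R1 \<tau>) (R2 \<tau>) (Q \<tau>) u = 1 - Y \<tau> \<bullet> X \<tau>" for \<tau>
    by (simp add: los_potential_def X_def Y_def inner_matrix_vector_transpose)
  moreover have "cross3 (X t) (Y t) \<bullet> (transpose (Q t) *v v)
      = - (los_error (R2 t) (R1 t) (transpose (Q t)) u \<bullet> v)" for v
    using rotation_cross3[OF rot, of "X t" "Y t"]
    by (simp add: inner_matrix_vector_transpose los_error_def X_def Y_def
        rotation_transpose_mult_vector(2)[OF rot] cross_skew[of "bvec (R2 t) u"])
  ultimately show ?thesis
    by (auto intro: DERIV_diff[OF DERIV_const, THEN DERIV_cong]
        simp: WQ los_error_def X_def Y_def inner_diff_right inner_add_right
          matrix_vector_mult_diff_distrib[symmetric])
qed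

lemma has_vector_derivative_los_error:
  assumes R1: "(R1 has_vector_derivative R1 t ** hat W1) (at t within S)"
    and R2: "(R2 has_vector_derivative R2 t ** hat W2) (at t within S)"
    and Q: "(Q has_vector_derivative Q t ** hat WQ) (at t within S)"
    and rot1: "rotation_matrix (R1 t)" and rot2: "rotation_matrix (R2 t)"
    and rot: "rotation_matrix (Q t)" and WQ: "WQ = Wa - transpose (Q t) *v Wb"
  shows "\<exists>p. ((\<lambda>\<tau>. los_error (R1 \<tau>) (R2 \<tau>) (Q \<tau>) u) has_vector_derivative
                p + cross3 (los_error (R1 t) (R2 t) (Q t) u) Wa) (at t within S)
           \<and> norm p \<le> (norm u)\<^sup>2 * (norm (W1 - Wa) + norm (W2 - Wb))"
proof -
  define X where "X \<tau> = bvec (R1 \<tau>) u" for \<tau>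
  define Y where "Y \<tau> = transpose (Q \<tau>) *v bvec (R2 \<tau>) u" for \<tau>
  define p where "p = cross3 (cross3 (X t) (W1 - Wa)) (Y t)
    + cross3 (X t) (cross3 (Y t) (transpose (Q t) *v (W2 - Wb)))"
  have "((\<lambda>\<tau>. cross3 (X \<tau>) (Y \<tau>)) has_vector_derivative p + cross3 (cross3 (X t) (Y t)) Wa)
          (at t within S)"
    using has_vector_derivative_cross_rotating[where U = Wa,
        OF has_vector_derivative_bvec[OF R1]
           has_vector_derivative_transpose_mult_rotating[OF Q has_vector_derivative_bvec[OF R2] rot]]
    by (simp add: p_def X_def Y_def WQ matrix_vector_mult_diff_distrib)
  moreover have "norm p \<le> (norm u)\<^sup>2 * (norm (W1 - Wa) + norm (W2 - Wb))"
  proof -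
    have X: "norm (X t) = norm u" and Y: "norm (Y t) = norm u"
      and QW: "norm (transpose (Q t) *v (W2 - Wb)) = norm (W2 - Wb)"
      by (simp_all add: X_def Y_def norm_bvec rot1 rot2 rotation_norm rotation_matrix_transpose rot)
    have "norm p \<le> norm (X t) * norm (W1 - Wa) * norm (Y t)
        + norm (X t) * (norm (Y t) * norm (transpose (Q t) *v (W2 - Wb)))"
      unfolding p_def
      by (intro norm_triangle_le add_mono order_trans[OF norm_cross3_le] mult_right_mono
          mult_left_mono norm_cross3_le) simp_all
    then show ?thesis
      unfolding X Y QW by (simp add: power2_eq_square algebra_simps)
  qed
  ultimately show ?thesis
    unfolding los_error_def X_def Y_def by blast
qed

lemma has_vector_derivative_los_error_pair:
  assumes R1: "(R1 has_vector_derivative R1 t ** hat W1) (at t within S)"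
    and R2: "(R2 has_vector_derivative R2 t ** hat W2) (at t within S)"
    and Q: "(Q has_vector_derivative Q t ** hat WQ) (at t within S)"
    and rot1: "rotation_matrix (R1 t)" and rot2: "rotation_matrix (R2 t)"
    and rot: "rotation_matrix (Q t)" and WQ: "WQ = Wa - transpose (Q t) *v Wb"
    and Wa: "norm Wa \<le> B" and u1: "norm u1 = 1" and u2: "norm u2 = 1"
    and ka: "ka \<ge> 0" and kb: "kb \<ge> 0"
  defines "e \<equiv> \<lambda>\<tau>. ka *\<^sub>R los_error (R1 \<tau>) (R2 \<tau>) (Q \<tau>) u1 + kb *\<^sub>R los_error (R1 \<tau>) (R2 \<tau>) (Q \<tau>) u2"
  shows "\<exists>v. (e has_vector_derivative v) (at t within S)
           \<and> norm v \<le> (ka + kb) * (norm (W1 - Wa) + norm (W2 - Wb)) + B * norm (e t)"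
  using has_vector_derivative_los_error[OF R1 R2 Q rot1 rot2 rot WQ, of u1]
    has_vector_derivative_los_error[OF R1 R2 Q rot1 rot2 rot WQ, of u2] ka kb Wa
  unfolding e_def u1 u2
  by (auto intro!: has_vector_derivative_weighted_rotating_sum)

lemma los_potential_relative_rotation:
  "los_potential R1 R2 Q u = 1 - u \<bullet> ((R1 ** transpose Q ** transpose R2) *v u)"
proof -
  have "u \<bullet> ((R1 ** transpose Q ** transpose R2) *v u)
      = (transpose R1 *v u) \<bullet> (transpose Q *v (transpose R2 *v u))"
    by (simp add: inner_matrix_vector_transpose[of u R1] matrix_vector_mul_assoc[symmetric])
  also have "\<dots> = bvec R2 u \<bullet> (Q *v bvec R1 u)"
    unfolding inner_matrix_vector_transpose[of "transpose R1 *v u"] bvec_def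
    by (simp add: inner_commute)
  finally show ?thesis by (simp add: los_potential_def)
qed

lemma los_error_relative_rotation:
  assumes "rotation_matrix R1"
  shows "los_error R1 R2 Q u = transpose R1 *v cross3 u ((R1 ** transpose Q ** transpose R2) *v u)"
  using rotation_cross3[OF rotation_matrix_transpose[OF assms]]
  by (simp add: los_error_def bvec_def matrix_vector_mul_assoc[symmetric]
      rotation_transpose_mult_vector(1)[OF assms])

section \<open>Bounds for the potential\<close>

lemma rotation_matrix_orthonormal_frame:
  assumes u1: "norm u1 = 1" and u2: "norm u2 = 1" and o: "u1 \<bullet> u2 = 0"
  shows "rotation_matrix (vector [u1, u2, cross3 u1 u2] :: real^3^3)"
proof -
  define u3 where "u3 = cross3 u1 u2"
  define P :: "real^3^3" where "P = vector [u1, u2, u3]"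
  have n12: "u1 \<bullet> u1 = 1" "u2 \<bullet> u2 = 1"
    using u1 u2 by (simp_all add: norm_eq_1)
  have "(norm u3)\<^sup>2 = 1"
    using norm_cross_dot[of u1 u2] u1 u2 o by (simp add: u3_def)
  then have "norm u3 = 1"
    using norm_ge_zero[of u3] power2_eq_1_iff[of "norm u3"] by linarith
  then have n: "u1 \<bullet> u1 = 1" "u2 \<bullet> u2 = 1" "u3 \<bullet> u3 = 1"
    using n12 by (simp_all add: norm_eq_1)
  have "u2 \<bullet> u1 = 0" "u1 \<bullet> u3 = 0" "u3 \<bullet> u1 = 0" "u2 \<bullet> u3 = 0" "u3 \<bullet> u2 = 0"
    using o by (simp_all add: u3_def dot_cross_self inner_commute)
  then have "P ** transpose P = mat 1"
    using n o by (simp add: P_def vec_eq_iff forall_3 matrix_matrix_mult_def transpose_def mat_def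
        inner_vec_def)
  moreover have "det P = 1"
    using n(1,2) o by (simp add: P_def u3_def dot_cross_det[symmetric] Lagrange inner_commute)
  ultimately show ?thesis
    by (simp add: rotation_matrix_def orthogonal_matrix_def matrix_left_right_inverse P_def u3_def)
qed

text \<open>\<open>A\<close> is the matrix of \<open>N\<close> in the frame \<open>u1, u2, u1 \<times> u2\<close>.\<close>
lemma weighted_error_in_frame:
  fixes N :: "real^3^3"
  assumes rN: "rotation_matrix N" and u1: "norm u1 = 1" and u2: "norm u2 = 1" and o: "u1 \<bullet> u2 = 0"
  obtains A :: "real^3^3" where "rotation_matrix A"
    and "u1 \<bullet> (N *v u1) = A$1$1" and "u2 \<bullet> (N *v u2) = A$2$2"
    and "(norm (ka *\<^sub>R cross3 u1 (N *v u1) + kb *\<^sub>R cross3 u2 (N *v u2)))\<^sup>2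
           = (kb * A$3$2)\<^sup>2 + (ka * A$3$1)\<^sup>2 + (ka * A$2$1 - kb * A$1$2)\<^sup>2"
proof
  define u3 where "u3 = cross3 u1 u2"
  define P :: "real^3^3" where "P = vector [u1, u2, u3]"
  define A where "A = P ** N ** transpose P"
  have rP: "rotation_matrix P"
    unfolding P_def u3_def by (rule rotation_matrix_orthonormal_frame[OF u1 u2 o])
  show "rotation_matrix A"
    unfolding A_def by (intro rotation_matrix_mul rotation_matrix_transpose rP rN)
  have Pv: "P *v y = vector [u1 \<bullet> y, u2 \<bullet> y, u3 \<bullet> y]" for y
    by (simp add: P_def vec_eq_iff forall_3 matrix_vector_mult_def inner_vec_def)
  have PT: "transpose P *v axis 1 1 = u1" "transpose P *v axis 2 1 = u2"
    by (simp_all add: P_def vec_eq_iff forall_3 matrix_vector_mult_def transpose_def axis_def sum_3)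
  have A: "A$i$j = (P *v (N *v (transpose P *v axis j 1)))$i" for i j
  proof -
    have "A *v axis j 1 = P *v (N *v (transpose P *v axis j 1))"
      unfolding A_def by (simp add: matrix_vector_mul_assoc matrix_mul_assoc)
    then show ?thesis by (simp add: matrix_vector_mult_basis column_def vec_eq_iff)
  qed
  have PNu: "P *v (N *v u1) = vector [A$1$1, A$2$1, A$3$1]" "P *v (N *v u2) = vector [A$1$2, A$2$2, A$3$2]"
    by (simp_all add: A PT Pv)
  show "u1 \<bullet> (N *v u1) = A$1$1" "u2 \<bullet> (N *v u2) = A$2$2"
    by (simp_all add: A PT Pv)
  have "u3 \<bullet> u1 = 0" "u3 \<bullet> u2 = 0"
    by (simp_all add: u3_def dot_cross_self)
  then have Pu: "P *v u1 = vector [1, 0, 0]" "P *v u2 = vector [0, 1, 0]"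
    using u1 u2 o by (simp_all add: Pv norm_eq_1 inner_commute)
  let ?E = "ka *\<^sub>R cross3 u1 (N *v u1) + kb *\<^sub>R cross3 u2 (N *v u2)"
  have "P *v ?E = ka *\<^sub>R cross3 (P *v u1) (P *v (N *v u1)) + kb *\<^sub>R cross3 (P *v u2) (P *v (N *v u2))"
    by (simp add: matrix_vector_right_distrib matrix_vector_mult_scaleR rotation_cross3[OF rP])
  then show "(norm ?E)\<^sup>2 = (kb * A$3$2)\<^sup>2 + (ka * A$3$1)\<^sup>2 + (ka * A$2$1 - kb * A$1$2)\<^sup>2"
    unfolding rotation_norm[OF rP, of ?E, symmetric] power2_norm_eq_inner Pu PNu
    by (simp add: inner_vec_def sum_3 cross3_def power2_eq_square algebra_simps)
qed

locale rotation_entries =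
  fixes n11 n12 n13 n21 n22 n23 n31 n32 n33 :: real
  assumes c1: "n11^2 + n21^2 + n31^2 = 1" and c2: "n12^2 + n22^2 + n32^2 = 1"
    and c3: "n13^2 + n23^2 + n33^2 = 1"
    and r1: "n11^2 + n12^2 + n13^2 = 1" and r2: "n21^2 + n22^2 + n23^2 = 1"
    and r3: "n31^2 + n32^2 + n33^2 = 1"
    and o13: "n11*n13 + n21*n23 + n31*n33 = 0" and o23: "n12*n13 + n22*n23 + n32*n33 = 0"
    and p13: "n11*n31 + n12*n32 + n13*n33 = 0" and p23: "n21*n31 + n22*n32 + n23*n33 = 0"
    and d11: "n11 = n22*n33 - n23*n32" and d22: "n22 = n33*n11 - n31*n13"
    and d33: "n33 = n11*n22 - n12*n21"
begin

lemma diagonal_le_one: "n11 \<le> 1" "n22 \<le> 1"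
proof -
  have "n11^2 \<le> 1" "n22^2 \<le> 1"
    using c1 c2 zero_le_power2[of n21] zero_le_power2[of n31] zero_le_power2[of n12]
      zero_le_power2[of n32] by linarith+
  then show "n11 \<le> 1" "n22 \<le> 1"
    by (simp_all add: abs_square_le_1)
qed

text \<open>With \<open>q\<close> the unit quaternion of the rotation, \<open>1 + n33 - n11 - n22 = 4 q3\<^sup>2\<close>. If it
  were negative, its products with \<open>4 q0\<^sup>2, 4 q1\<^sup>2, 4 q2\<^sup>2\<close>, which are squares, would force
  these three to be \<open>\<le> 0\<close>; but the four combinations sum to \<open>4\<close>.\<close>
lemma quaternion_component_nonneg: "0 \<le> 1 + n33 - n11 - n22"
proof (rule ccontr)
  assume neg: "\<not> ?thesis"
  have nonpos: "a \<le> 0" if "a * (1 + n33 - n11 - n22) = c^2" for a c :: real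
    using that neg zero_le_power2[of c] mult_pos_neg[of a "1 + n33 - n11 - n22"] by linarith
  have "(1 + n11 + n22 + n33) * (1 + n33 - n11 - n22) = (n21 - n12)^2"
    using c1 c2 c3 r1 r2 r3 d11 d22 d33 by algebra
  from nonpos[OF this] have "1 + n11 + n22 + n33 \<le> 0" .
  moreover have "(1 + n11 - n22 - n33) * (1 + n33 - n11 - n22) = (n13 + n31)^2"
    using c1 c2 c3 r1 r2 r3 d11 d22 d33 o13 p13 by algebra
  from nonpos[OF this] have "1 + n11 - n22 - n33 \<le> 0" .
  moreover have "(1 + n22 - n11 - n33) * (1 + n33 - n11 - n22) = (n23 + n32)^2"
    using c1 c2 c3 r1 r2 r3 d11 d22 d33 o23 p23 by algebra
  from nonpos[OF this] have "1 + n22 - n11 - n33 \<le> 0" .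
  ultimately show False
    using neg by linarith
qed

lemma skew_square_sum_1: "(n13 - n31)^2 + (n21 - n12)^2 = 2 * (1 + n11 + n22 + n33) * (1 - n11)"
  using c1 c2 c3 r1 r2 r3 d11 d22 d33 by algebra

lemma skew_square_sum_2: "(n32 - n23)^2 + (n21 - n12)^2 = 2 * (1 + n11 + n22 + n33) * (1 - n22)"
  using c1 c2 c3 r1 r2 r3 d11 d22 d33 by algebra

text \<open>Split into skew and symmetric parts; only the skew part is kept.\<close>
lemma weighted_error_ge_skew:
  "(ka^2 * (n31 - n13)^2 + kb^2 * (n32 - n23)^2 + (ka + kb)^2 * (n21 - n12)^2) / 4
     \<le> (kb * n32)^2 + (ka * n31)^2 + (ka * n21 - kb * n12)^2"
proof -
  have a: "n31^2 + n21^2 = n12^2 + n13^2" using c1 r1 by linarith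
  have b: "n12^2 + n32^2 = n21^2 + n23^2" using c2 r2 by linarith
  have "(kb * n32)^2 + (ka * n31)^2 + (ka * n21 - kb * n12)^2
    = (ka^2 * (n31 - n13)^2 + kb^2 * (n32 - n23)^2 + (ka + kb)^2 * (n21 - n12)^2) / 4
      + (ka^2 * (n31 + n13)^2 + kb^2 * (n32 + n23)^2 + (ka - kb)^2 * (n21 + n12)^2) / 4"
    using a b by algebra
  then show ?thesis by simp
qed

lemma trace_potential_le_weighted_error:
  assumes ka: "ka > 0" and kb: "kb > 0"
  shows "min ka kb * ((1 + n11 + n22 + n33) * (ka * (1 - n11) + kb * (1 - n22)))
    \<le> 2 * ((kb * n32)^2 + (ka * n31)^2 + (ka * n21 - kb * n12)^2)"
proof -
  define m where "m = min ka kb"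
  define S where "S = ka * (n31 - n13)^2 + kb * (n32 - n23)^2 + (ka + kb) * (n21 - n12)^2"
  have weight: "m * (k * s) \<le> k^2 * s" if "m \<le> k" "0 \<le> s" for k s :: real
    using that ka kb mult_right_mono[OF that(1), of "k * s"]
    by (simp add: m_def power2_eq_square mult.assoc mult_nonneg_nonneg)
  have "2 * ((1 + n11 + n22 + n33) * (ka * (1 - n11) + kb * (1 - n22))) = S"
    unfolding S_def using skew_square_sum_1 skew_square_sum_2 by algebra
  then have "m * ((1 + n11 + n22 + n33) * (ka * (1 - n11) + kb * (1 - n22))) = m * S / 2"
    by (simp flip: \<open>2 * _ = S\<close>)
  moreover have "m * S \<le> ka^2 * (n31 - n13)^2 + kb^2 * (n32 - n23)^2 + (ka + kb)^2 * (n21 - n12)^2"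
    unfolding S_def distrib_left using ka kb
    by (intro add_mono weight) (simp_all add: m_def)
  ultimately show ?thesis
    using weighted_error_ge_skew[of ka kb] unfolding m_def[symmetric] by argo
qed

lemma weight_gap_le_trace:
  assumes "ka > 0" "kb > 0"
  shows "2 * min ka kb - (ka * (1 - n11) + kb * (1 - n22))
    \<le> min ka kb * (1 + n11 + n22 + n33) / 2"
proof -
  have "min ka kb * (1 - n11) \<le> ka * (1 - n11)" "min ka kb * (1 - n22) \<le> kb * (1 - n22)"
    using diagonal_le_one by (simp_all add: mult_right_mono)
  moreover have "0 \<le> min ka kb * (1 + n33 - n11 - n22)"
    using quaternion_component_nonneg assms by simp
  ultimately show ?thesis
    by (simp add: algebra_simps)
qed

lemma potential_le_weighted_error:
  assumes ka: "ka > 0" and kb: "kb > 0"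
    and P: "ka * (1 - n11) + kb * (1 - n22) \<le> \<psi>" and \<psi>: "\<psi> < 2 * min ka kb"
  shows "ka * (1 - n11) + kb * (1 - n22)
    \<le> min ka kb * (ka + kb) / (min (ka\<^sup>2) (kb\<^sup>2) * (2 * min ka kb - \<psi>))
       * ((kb * n32)^2 + (ka * n31)^2 + (ka * n21 - kb * n12)^2)"
proof -
  define m where "m = min ka kb"
  define P where "P = ka * (1 - n11) + kb * (1 - n22)"
  define E2 where "E2 = (kb * n32)^2 + (ka * n31)^2 + (ka * n21 - kb * n12)^2"
  define X0 where "X0 = 1 + n11 + n22 + n33"
  have m: "0 < m" "m \<le> ka + kb" using ka kb by (simp_all add: m_def)
  have m2: "min (ka\<^sup>2) (kb\<^sup>2) = m\<^sup>2"
    using ka kb by (simp add: m_def min_def power_mono)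
  have P0: "0 \<le> P"
    using diagonal_le_one ka kb by (simp add: P_def)
  have "P * (m * (2 * m - \<psi>)) \<le> P * m * (2 * m - P)"
    using mult_left_mono[of "2 * m - \<psi>" "2 * m - P" "P * m"] P P0 m
    by (simp add: P_def[symmetric] mult.assoc)
  also have "\<dots> \<le> P * m * (m * X0 / 2)"
    using weight_gap_le_trace[OF ka kb] P0 m
    by (intro mult_left_mono) (simp_all add: P_def m_def X0_def)
  also have "\<dots> = m / 2 * (m * (X0 * P))" by (simp add: algebra_simps)
  also have "\<dots> \<le> m * E2"
    using trace_potential_le_weighted_error[OF ka kb] m
    by (simp add: m_def X0_def P_def E2_def)
  also have "\<dots> \<le> (ka + kb) * E2"
    using m by (intro mult_right_mono) (simp_all add: E2_def)
  finally have "P * (m * (2 * m - \<psi>)) \<le> (ka + kb) * E2" .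
  moreover have "0 < m * (2 * m - \<psi>)" using m \<psi> by (simp add: m_def)
  ultimately have "P \<le> (ka + kb) * E2 / (m * (2 * m - \<psi>))"
    by (simp add: pos_le_divide_eq)
  also have "\<dots> = m * (ka + kb) / (m\<^sup>2 * (2 * m - \<psi>)) * E2"
    using m by (simp add: power2_eq_square)
  finally show ?thesis unfolding P_def E2_def m2 m_def .
qed

end

lemma rotation_entries_rotation_matrix:
  fixes A :: "real^3^3"
  assumes r: "rotation_matrix A"
  shows "rotation_entries (A$1$1) (A$1$2) (A$1$3) (A$2$1) (A$2$2) (A$2$3) (A$3$1) (A$3$2) (A$3$3)"
proof -
  have o1: "transpose A ** A = mat 1" and o2: "A ** transpose A = mat 1"
    using r by (auto simp: rotation_matrix_def orthogonal_matrix_def)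
  have x1: "A *v axis 3 1 = cross3 (A *v axis 1 1) (A *v axis 2 1)"
    using cross_rotation_matrix[OF r, of "axis 1 1" "axis 2 1"] cross_basis by simp
  have x2: "A *v axis 1 1 = cross3 (A *v axis 2 1) (A *v axis 3 1)"
    using cross_rotation_matrix[OF r, of "axis 2 1" "axis 3 1"] cross_basis by simp
  have x3: "A *v axis 2 1 = cross3 (A *v axis 3 1) (A *v axis 1 1)"
    using cross_rotation_matrix[OF r, of "axis 3 1" "axis 1 1"] cross_basis by simp
  show ?thesis
    by unfold_locales
      (use o1 o2 x1 x2 x3 in \<open>simp_all add: vec_eq_iff matrix_matrix_mult_def transpose_def
        mat_def sum_3 forall_3 matrix_vector_mult_def axis_def cross3_def power2_eq_square
        algebra_simps\<close>)
qed

lemma norm_cross_rotation_sq_le: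
  assumes N: "rotation_matrix N" and u: "norm u = 1"
  shows "(norm (cross3 u (N *v u)))\<^sup>2 \<le> 2 * (1 - u \<bullet> (N *v u))" and "u \<bullet> (N *v u) \<le> 1"
proof -
  have Nu: "norm (N *v u) = 1" using rotation_norm[OF N] u by simp
  have cs: "\<bar>u \<bullet> (N *v u)\<bar> \<le> 1" using Cauchy_Schwarz_ineq2[of u "N *v u"] u Nu by simp
  then show "u \<bullet> (N *v u) \<le> 1" by simp
  have "(norm (cross3 u (N *v u)))\<^sup>2 = (1 - u \<bullet> (N *v u)) * (1 + u \<bullet> (N *v u))"
    using norm_cross_dot[of u "N *v u"] u Nu by (simp add: power2_eq_square algebra_simps)
  also have "\<dots> \<le> (1 - u \<bullet> (N *v u)) * 2" using cs by (intro mult_left_mono) auto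
  finally show "(norm (cross3 u (N *v u)))\<^sup>2 \<le> 2 * (1 - u \<bullet> (N *v u))" by simp
qed

lemma weighted_error_sq_le_potential:
  assumes N: "rotation_matrix N" and u1: "norm u1 = 1" and u2: "norm u2 = 1"
    and ka: "ka > 0" and kb: "kb > 0"
  shows "(norm (ka *\<^sub>R cross3 u1 (N *v u1) + kb *\<^sub>R cross3 u2 (N *v u2)))\<^sup>2
    \<le> 2 * (ka + kb) * (ka * (1 - u1 \<bullet> (N *v u1)) + kb * (1 - u2 \<bullet> (N *v u2)))"
proof -
  define \<alpha> where "\<alpha> = norm (cross3 u1 (N *v u1))"
  define \<beta> where "\<beta> = norm (cross3 u2 (N *v u2))"
  have "norm (ka *\<^sub>R cross3 u1 (N *v u1) + kb *\<^sub>R cross3 u2 (N *v u2)) \<le> ka * \<alpha> + kb * \<beta>"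
    using ka kb norm_triangle_ineq[of "ka *\<^sub>R cross3 u1 (N *v u1)" "kb *\<^sub>R cross3 u2 (N *v u2)"]
    by (simp add: \<alpha>_def \<beta>_def)
  then have "(norm (ka *\<^sub>R cross3 u1 (N *v u1) + kb *\<^sub>R cross3 u2 (N *v u2)))\<^sup>2 \<le> (ka * \<alpha> + kb * \<beta>)\<^sup>2"
    by (simp add: power_mono)
  also have "\<dots> \<le> (ka + kb) * (ka * \<alpha>\<^sup>2 + kb * \<beta>\<^sup>2)"
  proof -
    have "0 \<le> ka * kb * (\<alpha> - \<beta>)\<^sup>2" using ka kb by simp
    then show ?thesis by (simp add: power2_eq_square algebra_simps)
  qed
  also have "\<dots> \<le> (ka + kb) * (ka * (2 * (1 - u1 \<bullet> (N *v u1))) + kb * (2 * (1 - u2 \<bullet> (N *v u2))))"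
    using norm_cross_rotation_sq_le[OF N u1] norm_cross_rotation_sq_le[OF N u2] ka kb
    by (intro mult_left_mono add_mono) (simp_all add: \<alpha>_def \<beta>_def)
  finally show ?thesis by (simp add: algebra_simps)
qed

lemma potential_le_weighted_error_sq:
  assumes N: "rotation_matrix N" and u1: "norm u1 = 1" and u2: "norm u2 = 1" and o: "u1 \<bullet> u2 = 0"
    and ka: "ka > 0" and kb: "kb > 0"
    and P: "ka * (1 - u1 \<bullet> (N *v u1)) + kb * (1 - u2 \<bullet> (N *v u2)) \<le> \<psi>"
    and \<psi>: "\<psi> < 2 * min ka kb"
  shows "ka * (1 - u1 \<bullet> (N *v u1)) + kb * (1 - u2 \<bullet> (N *v u2))
    \<le> min ka kb * (ka + kb) / (min (ka\<^sup>2) (kb\<^sup>2) * (2 * min ka kb - \<psi>))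
       * (norm (ka *\<^sub>R cross3 u1 (N *v u1) + kb *\<^sub>R cross3 u2 (N *v u2)))\<^sup>2"
proof -
  obtain A :: "real^3^3" where A: "rotation_matrix A"
    and "u1 \<bullet> (N *v u1) = A$1$1" "u2 \<bullet> (N *v u2) = A$2$2"
    and "(norm (ka *\<^sub>R cross3 u1 (N *v u1) + kb *\<^sub>R cross3 u2 (N *v u2)))\<^sup>2
           = (kb * A$3$2)\<^sup>2 + (ka * A$3$1)\<^sup>2 + (ka * A$2$1 - kb * A$1$2)\<^sup>2"
    by (rule weighted_error_in_frame[OF N u1 u2 o])
  then show ?thesis
    using rotation_entries.potential_le_weighted_error[OF rotation_entries_rotation_matrix[OF A] ka kb]
      P \<psi> by simp
qed

lemma los_pair_potential_bounds:
  assumes R1: "rotation_matrix R1" and R2: "rotation_matrix R2" and Q: "rotation_matrix Q"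
    and u1: "norm u1 = 1" and u2: "norm u2 = 1" and o: "u1 \<bullet> u2 = 0"
    and ka: "ka > 0" and kb: "kb > 0"
  defines "P \<equiv> ka * los_potential R1 R2 Q u1 + kb * los_potential R1 R2 Q u2"
    and "e \<equiv> ka *\<^sub>R los_error R1 R2 Q u1 + kb *\<^sub>R los_error R1 R2 Q u2"
  shows "P \<le> \<psi> \<and> \<psi> < 2 * min ka kb \<longrightarrow>
    min ka kb / (2 * max (max (ka\<^sup>2) (kb\<^sup>2)) ((ka - kb)\<^sup>2) + 2 * (ka + kb)\<^sup>2) * (norm e)\<^sup>2 \<le> P
    \<and> P \<le> min ka kb * (ka + kb) / (min (ka\<^sup>2) (kb\<^sup>2) * (2 * min ka kb - \<psi>)) * (norm e)\<^sup>2"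
proof -
  define N where "N = R1 ** transpose Q ** transpose R2"
  have N: "rotation_matrix N"
    unfolding N_def by (intro rotation_matrix_mul rotation_matrix_transpose R1 R2 Q)
  have P: "P = ka * (1 - u1 \<bullet> (N *v u1)) + kb * (1 - u2 \<bullet> (N *v u2))"
    by (simp add: P_def N_def los_potential_relative_rotation)
  have "e = transpose R1 *v (ka *\<^sub>R cross3 u1 (N *v u1) + kb *\<^sub>R cross3 u2 (N *v u2))"
    by (simp add: e_def N_def los_error_relative_rotation[OF R1] matrix_vector_right_distrib
        matrix_vector_mult_scaleR)
  then have e: "norm e = norm (ka *\<^sub>R cross3 u1 (N *v u1) + kb *\<^sub>R cross3 u2 (N *v u2))"
    by (simp add: rotation_norm rotation_matrix_transpose R1)
  define D where "D = 2 * max (max (ka\<^sup>2) (kb\<^sup>2)) ((ka - kb)\<^sup>2) + 2 * (ka + kb)\<^sup>2"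
  have "2 * (ka + kb)\<^sup>2 \<le> D"
    by (simp add: D_def le_max_iff_disj)
  moreover have "min ka kb * (2 * (ka + kb)) \<le> 2 * (ka + kb)\<^sup>2"
    using ka kb mult_right_mono[of "min ka kb" "ka + kb" "2 * (ka + kb)"]
    by (simp add: power2_eq_square algebra_simps)
  moreover have "0 < 2 * (ka + kb)\<^sup>2" using ka kb by simp
  ultimately have "0 < D" and "min ka kb * (2 * (ka + kb)) \<le> D" by linarith+
  then have D: "0 < D" "min ka kb * (2 * (ka + kb)) / D \<le> 1" by (simp_all add: pos_divide_le_eq)
  have P0: "0 \<le> P"
    using norm_cross_rotation_sq_le(2)[OF N u1] norm_cross_rotation_sq_le(2)[OF N u2] ka kb
    by (simp add: P)
  have "min ka kb / D * (norm e)\<^sup>2 \<le> min ka kb / D * (2 * (ka + kb) * P)"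
    using weighted_error_sq_le_potential[OF N u1 u2 ka kb] ka kb D
    by (intro mult_left_mono) (simp_all add: e P)
  also have "\<dots> = min ka kb * (2 * (ka + kb)) / D * P" by simp
  also have "\<dots> \<le> P"
    using mult_right_mono[OF D(2) P0] by simp
  finally show ?thesis
    using potential_le_weighted_error_sq[OF N u1 u2 o ka kb, of \<psi>]
    by (simp add: D_def P e)
qed

section \<open>The two spacecraft\<close>

lemma los_pair_properties:
  fixes R1 R2 Q :: "real \<Rightarrow> real^3^3"
  assumes R1: "(R1 has_vector_derivative R1 t ** hat W1) (at t within S)"
    and R2: "(R2 has_vector_derivative R2 t ** hat W2) (at t within S)"
    and Q: "(Q has_vector_derivative Q t ** hat WQ) (at t within S)"
    and rot1: "rotation_matrix (R1 t)" and rot2: "rotation_matrix (R2 t)"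
    and rot: "rotation_matrix (Q t)" and WQ: "WQ = Wa - transpose (Q t) *v Wb"
    and Wa: "norm Wa \<le> B" and Wb: "norm Wb \<le> B"
    and u1: "norm u1 = 1" and u2: "norm u2 = 1" and o: "u1 \<bullet> u2 = 0"
    and ka: "ka > 0" and kb: "kb > 0"
    and P: "\<And>\<tau>. \<tau> \<in> S \<Longrightarrow>
      P \<tau> = ka * los_potential (R1 \<tau>) (R2 \<tau>) (Q \<tau>) u1 + kb * los_potential (R1 \<tau>) (R2 \<tau>) (Q \<tau>) u2"
    and e12: "\<And>\<tau>. \<tau> \<in> S \<Longrightarrow>
      e12 \<tau> = ka *\<^sub>R los_error (R1 \<tau>) (R2 \<tau>) (Q \<tau>) u1 + kb *\<^sub>R los_error (R1 \<tau>) (R2 \<tau>) (Q \<tau>) u2"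
    and e21: "\<And>\<tau>. \<tau> \<in> S \<Longrightarrow>
      e21 \<tau> = ka *\<^sub>R los_error (R2 \<tau>) (R1 \<tau>) (transpose (Q \<tau>)) u1
        + kb *\<^sub>R los_error (R2 \<tau>) (R1 \<tau>) (transpose (Q \<tau>)) u2"
    and t: "t \<in> S"
  shows "e12 t = - (transpose (Q t) *v e21 t)" and "norm (e12 t) = norm (e21 t)"
    and "(P has_real_derivative e12 t \<bullet> (W1 - Wa) + e21 t \<bullet> (W2 - Wb)) (at t within S)"
    and "\<exists>v. (e12 has_vector_derivative v) (at t within S)
           \<and> norm v \<le> (ka + kb) * (norm (W1 - Wa) + norm (W2 - Wb)) + B * norm (e12 t)"
    and "\<exists>v. (e21 has_vector_derivative v) (at t within S)
           \<and> norm v \<le> (ka + kb) * (norm (W1 - Wa) + norm (W2 - Wb)) + B * norm (e21 t)"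
    and "P t \<le> \<psi> \<and> \<psi> < 2 * min ka kb \<longrightarrow>
      min ka kb / (2 * max (max (ka\<^sup>2) (kb\<^sup>2)) ((ka - kb)\<^sup>2) + 2 * (ka + kb)\<^sup>2) * (norm (e12 t))\<^sup>2 \<le> P t
      \<and> P t \<le> min ka kb * (ka + kb) / (min (ka\<^sup>2) (kb\<^sup>2) * (2 * min ka kb - \<psi>)) * (norm (e12 t))\<^sup>2"
proof -
  define E12 where "E12 \<tau> = ka *\<^sub>R los_error (R1 \<tau>) (R2 \<tau>) (Q \<tau>) u1 + kb *\<^sub>R los_error (R1 \<tau>) (R2 \<tau>) (Q \<tau>) u2"
    for \<tau>
  define E21 where "E21 \<tau> = ka *\<^sub>R los_error (R2 \<tau>) (R1 \<tau>) (transpose (Q \<tau>)) u1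
    + kb *\<^sub>R los_error (R2 \<tau>) (R1 \<tau>) (transpose (Q \<tau>)) u2" for \<tau>
  have e12_E12: "e12 \<tau> = E12 \<tau>" and e21_E21: "e21 \<tau> = E21 \<tau>" if "\<tau> \<in> S" for \<tau>
    using e12[OF that] e21[OF that] by (simp_all add: E12_def E21_def)
  show "e12 t = - (transpose (Q t) *v e21 t)"
    by (simp add: e12[OF t] e21[OF t] los_error_swap[OF rot] matrix_vector_right_distrib
        matrix_vector_mult_scaleR)
  then show "norm (e12 t) = norm (e21 t)"
    by (simp add: rotation_norm rotation_matrix_transpose rot)
  have "((\<lambda>\<tau>. ka * los_potential (R1 \<tau>) (R2 \<tau>) (Q \<tau>) u1 + kb * los_potential (R1 \<tau>) (R2 \<tau>) (Q \<tau>) u2)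
      has_real_derivative e12 t \<bullet> (W1 - Wa) + e21 t \<bullet> (W2 - Wb)) (at t within S)"
    by (rule DERIV_add[OF DERIV_cmult DERIV_cmult, THEN DERIV_cong],
        (rule has_real_derivative_los_potential[OF R1 R2 Q rot WQ])+)
      (simp add: e12[OF t] e21[OF t] inner_add_left algebra_simps)
  then show "(P has_real_derivative e12 t \<bullet> (W1 - Wa) + e21 t \<bullet> (W2 - Wb)) (at t within S)"
    by (rule has_field_derivative_transform_within[OF _ zero_less_one t]) (simp add: P)
  have "\<exists>v. (E12 has_vector_derivative v) (at t within S)
      \<and> norm v \<le> (ka + kb) * (norm (W1 - Wa) + norm (W2 - Wb)) + B * norm (E12 t)"
    unfolding E12_def
    by (rule has_vector_derivative_los_error_pair[OF R1 R2 Q rot1 rot2 rot WQ Wa u1 u2])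
      (use ka kb in simp_all)
  then show "\<exists>v. (e12 has_vector_derivative v) (at t within S)
      \<and> norm v \<le> (ka + kb) * (norm (W1 - Wa) + norm (W2 - Wb)) + B * norm (e12 t)"
    using has_vector_derivative_transform[where g = e12 and f = E12, OF t e12_E12] e12_E12[OF t]
    by auto
  have "\<exists>v. (E21 has_vector_derivative v) (at t within S)
      \<and> norm v \<le> (ka + kb) * (norm (W2 - Wb) + norm (W1 - Wa)) + B * norm (E21 t)"
    unfolding E21_def
    by (rule has_vector_derivative_los_error_pair[OF R2 R1
          has_vector_derivative_transpose_rotation[OF Q rot WQ] rot2 rot1
          rotation_matrix_transpose[OF rot] _ Wb u1 u2])
      (use ka kb in simp_all)
  then show "\<exists>v. (e21 has_vector_derivative v) (at t within S)
      \<and> norm v \<le> (ka + kb) * (norm (W1 - Wa) + norm (W2 - Wb)) + B * norm (e21 t)"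
    using has_vector_derivative_transform[where g = e21 and f = E21, OF t e21_E21] e21_E21[OF t]
    by (auto simp: add.commute)
  show "P t \<le> \<psi> \<and> \<psi> < 2 * min ka kb \<longrightarrow>
      min ka kb / (2 * max (max (ka\<^sup>2) (kb\<^sup>2)) ((ka - kb)\<^sup>2) + 2 * (ka + kb)\<^sup>2) * (norm (e12 t))\<^sup>2 \<le> P t
      \<and> P t \<le> min ka kb * (ka + kb) / (min (ka\<^sup>2) (kb\<^sup>2) * (2 * min ka kb - \<psi>)) * (norm (e12 t))\<^sup>2"
    unfolding P[OF t] e12[OF t] by (rule los_pair_potential_bounds[OF rot1 rot2 rot u1 u2 o ka kb])
qed

lemma sdir_triangle:
  assumes "\<not> collinear {p1, p2, p3}"
  shows "norm (sdir p1 p2) = 1" and "sdir p2 p1 = - sdir p1 p2"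
    and "cross3 (sdir p1 p2) (sdir p1 p3) \<noteq> 0"
    and "\<exists>\<mu>>0. cross3 (sdir p2 p1) (sdir p2 p3) = - \<mu> *\<^sub>R cross3 (sdir p1 p2) (sdir p1 p3)"
proof -
  have ne: "0 < norm (p2 - p1)" "0 < norm (p3 - p1)" "0 < norm (p3 - p2)"
    using assms by (auto simp: insert_commute)
  then show "norm (sdir p1 p2) = 1"
    by (simp add: sdir_def)
  show "sdir p2 p1 = - sdir p1 p2"
    by (simp add: sdir_def norm_minus_commute[of p1 p2] scaleR_right_diff_distrib)
  have w: "cross3 (sdir p1 p2) (sdir p1 p3)
      = (1 / (norm (p2 - p1) * norm (p3 - p1))) *\<^sub>R cross3 (p2 - p1) (p3 - p1)"
    by (simp add: sdir_def cross_mult_left cross_mult_right)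
  have "cross3 (p2 - p1) (p3 - p1) \<noteq> 0"
    using assms collinear_3[of p2 p1 p3] cross_eq_0 by (auto simp: insert_commute)
  then show "cross3 (sdir p1 p2) (sdir p1 p3) \<noteq> 0"
    using w ne by simp
  have "cross3 (sdir p2 p1) (sdir p2 p3)
      = (1 / (norm (p2 - p1) * norm (p3 - p2))) *\<^sub>R cross3 (p1 - p2) (p3 - p2)"
    by (simp add: sdir_def cross_mult_left cross_mult_right norm_minus_commute[of p1 p2])
  also have "cross3 (p1 - p2) (p3 - p2) = - cross3 (p2 - p1) (p3 - p1)"
    unfolding cross3_def by (simp add: vec_eq_iff forall_3 algebra_simps)
  finally have "cross3 (sdir p2 p1) (sdir p2 p3)
      = - (norm (p3 - p1) / norm (p3 - p2)) *\<^sub>R cross3 (sdir p1 p2) (sdir p1 p3)"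
    using ne by (simp add: w)
  then show "\<exists>\<mu>>0. cross3 (sdir p2 p1) (sdir p2 p3) = - \<mu> *\<^sub>R cross3 (sdir p1 p2) (sdir p1 p3)"
    using ne by (intro exI[of _ "norm (p3 - p1) / norm (p3 - p2)"]) simp
qed

lemma line_of_sight_frame:
  assumes "\<not> collinear {p1, p2, p3}"
  defines "u2 \<equiv> sgn (cross3 (sdir p1 p2) (sdir p1 p3))"
  shows "norm (sdir p1 p2) = 1" and "norm u2 = 1" and "sdir p1 p2 \<bullet> u2 = 0"
    and "rotation_matrix Ri \<Longrightarrow> rotation_matrix Rj \<Longrightarrow>
      Psi_pair ka kb Ri Rj Q (sdir p1 p2) (sdir p1 p3) (sdir p2 p1) (sdir p2 p3)
        = ka * los_potential Ri Rj Q (sdir p1 p2) + kb * los_potential Ri Rj Q u2"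
    and "rotation_matrix Ri \<Longrightarrow> rotation_matrix Rj \<Longrightarrow>
      e_pair ka kb Ri Rj Q (sdir p1 p2) (sdir p1 p3) (sdir p2 p1) (sdir p2 p3)
        = ka *\<^sub>R los_error Ri Rj Q (sdir p1 p2) + kb *\<^sub>R los_error Ri Rj Q u2"
    and "rotation_matrix Ri \<Longrightarrow> rotation_matrix Rj \<Longrightarrow>
      e_pair ka kb Ri Rj Q (sdir p2 p1) (sdir p2 p3) (sdir p1 p2) (sdir p1 p3)
        = ka *\<^sub>R los_error Ri Rj Q (sdir p1 p2) + kb *\<^sub>R los_error Ri Rj Q u2"
proof -
  note tri = sdir_triangle[OF assms(1)]
  obtain \<mu> where \<mu>: "\<mu> > 0"
    and w': "cross3 (sdir p2 p1) (sdir p2 p3) = - \<mu> *\<^sub>R cross3 (sdir p1 p2) (sdir p1 p3)"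
    using tri(4) by blast
  show "norm (sdir p1 p2) = 1" by (rule tri(1))
  show "norm u2 = 1" "sdir p1 p2 \<bullet> u2 = 0"
    using tri(3) by (simp_all add: u2_def norm_sgn sgn_div_norm dot_cross_self)
  show "Psi_pair ka kb Ri Rj Q (sdir p1 p2) (sdir p1 p3) (sdir p2 p1) (sdir p2 p3)
      = ka * los_potential Ri Rj Q (sdir p1 p2) + kb * los_potential Ri Rj Q u2"
    "e_pair ka kb Ri Rj Q (sdir p1 p2) (sdir p1 p3) (sdir p2 p1) (sdir p2 p3)
      = ka *\<^sub>R los_error Ri Rj Q (sdir p1 p2) + kb *\<^sub>R los_error Ri Rj Q u2"
    if "rotation_matrix Ri" "rotation_matrix Rj"
    using Psi_pair_eq_los_potential[OF that tri(2,3) w' \<mu>] e_pair_eq_los_error[OF that tri(2,3) w' \<mu>]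
    by (simp_all add: u2_def)
  have normal: "cross3 (sdir p2 p1) (sdir p2 p3) \<noteq> 0"
    "cross3 (sdir p1 p2) (sdir p1 p3) = - (1 / \<mu>) *\<^sub>R cross3 (sdir p2 p1) (sdir p2 p3)"
    "1 / \<mu> > 0" "sgn (cross3 (sdir p2 p1) (sdir p2 p3)) = - u2"
    using \<mu> tri(3) by (simp_all add: w' u2_def sgn_scaleR sgn_minus)
  have "sdir p1 p2 = - sdir p2 p1"
    using tri(2) by simp
  then show "e_pair ka kb Ri Rj Q (sdir p2 p1) (sdir p2 p3) (sdir p1 p2) (sdir p1 p3)
      = ka *\<^sub>R los_error Ri Rj Q (sdir p1 p2) + kb *\<^sub>R los_error Ri Rj Q u2"
    if "rotation_matrix Ri" "rotation_matrix Rj"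
    using e_pair_eq_los_error[OF that \<open>sdir p1 p2 = - sdir p2 p1\<close> normal(1-3), unfolded normal(4)]
    by (simp add: tri(2) los_error_minus)
qed

theorem proposition1:
  fixes p1 p2 p3 :: "real^3"
    and R1 R2 Qd :: "real \<Rightarrow> real^3^3"
    and \<Omega>1 \<Omega>2 \<Omega>d1 \<Omega>d2 \<Omega>d12 \<Omega>d1' \<Omega>d2' :: "real \<Rightarrow> real^3"
    and ka kb Bd \<psi> :: real
  assumes noncol: "\<not> collinear {p1, p2, p3}"
    and R1_SO3: "\<And>t. t \<ge> 0 \<Longrightarrow> R1 t \<in> SO3"
    and R2_SO3: "\<And>t. t \<ge> 0 \<Longrightarrow> R2 t \<in> SO3"
    and R1_kin: "\<And>t. t \<ge> 0 \<Longrightarrow> (R1 has_vector_derivative (R1 t ** hat (\<Omega>1 t))) (at t within {0..})"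
    and R2_kin: "\<And>t. t \<ge> 0 \<Longrightarrow> (R2 has_vector_derivative (R2 t ** hat (\<Omega>2 t))) (at t within {0..})"
    and Qd_SO3: "\<And>t. t \<ge> 0 \<Longrightarrow> Qd t \<in> SO3"
    and Qd_kin: "\<And>t. t \<ge> 0 \<Longrightarrow> (Qd has_vector_derivative (Qd t ** hat (\<Omega>d12 t))) (at t within {0..})"
    and Od1_C1: "\<And>t. t \<ge> 0 \<Longrightarrow> (\<Omega>d1 has_vector_derivative \<Omega>d1' t) (at t within {0..})"
    and Od1'_cont: "continuous_on {0..} \<Omega>d1'"
    and Od2_C1: "\<And>t. t \<ge> 0 \<Longrightarrow> (\<Omega>d2 has_vector_derivative \<Omega>d2' t) (at t within {0..})"
    and Od2'_cont: "continuous_on {0..} \<Omega>d2'"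
    and Od12: "\<And>t. t \<ge> 0 \<Longrightarrow> \<Omega>d12 t = \<Omega>d1 t - transpose (Qd t) *v \<Omega>d2 t"
    and Bd_pos: "Bd > 0"
    and Od1_bd: "\<And>t. t \<ge> 0 \<Longrightarrow> norm (\<Omega>d1 t) \<le> Bd"
    and Od2_bd: "\<And>t. t \<ge> 0 \<Longrightarrow> norm (\<Omega>d2 t) \<le> Bd"
    and ka_pos: "ka > 0" and kb_pos: "kb > 0" and ka_ne_kb: "ka \<noteq> kb"
  shows "\<forall>t\<ge>0.
    (let s12 = sdir p1 p2; s13 = sdir p1 p3; s21 = sdir p2 p1; s23 = sdir p2 p3;
         Psi12 = (\<lambda>\<tau>. Psi_pair ka kb (R1 \<tau>) (R2 \<tau>) (Qd \<tau>) s12 s13 s21 s23);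
         e12 = (\<lambda>\<tau>. e_pair ka kb (R1 \<tau>) (R2 \<tau>) (Qd \<tau>) s12 s13 s21 s23);
         e21 = (\<lambda>\<tau>. e_pair ka kb (R2 \<tau>) (R1 \<tau>) (transpose (Qd \<tau>)) s21 s23 s12 s13);
         eO1 = \<Omega>1 t - \<Omega>d1 t;
         eO2 = \<Omega>2 t - \<Omega>d2 t
     in
       e12 t = - (transpose (Qd t) *v e21 t) \<and> norm (e12 t) = norm (e21 t)
     \<and> (Psi12 has_real_derivative (e12 t \<bullet> eO1 + e21 t \<bullet> eO2)) (at t within {0..})
     \<and> (\<exists>v. (e12 has_vector_derivative v) (at t within {0..}) \<and>
            norm v \<le> (ka + kb) * (norm eO1 + norm eO2) + Bd * norm (e12 t))
     \<and> (\<exists>v. (e21 has_vector_derivative v) (at t within {0..}) \<and>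
            norm v \<le> (ka + kb) * (norm eO1 + norm eO2) + Bd * norm (e21 t))
     \<and> (Psi12 t \<le> \<psi> \<and> \<psi> < 2 * min ka kb \<longrightarrow>
          min ka kb / (2 * max (max (ka\<^sup>2) (kb\<^sup>2)) ((ka - kb)\<^sup>2) + 2 * (ka + kb)\<^sup>2)
            * (norm (e12 t))\<^sup>2 \<le> Psi12 t
        \<and> Psi12 t \<le> min ka kb * (ka + kb) / (min (ka\<^sup>2) (kb\<^sup>2) * (2 * min ka kb - \<psi>))
            * (norm (e12 t))\<^sup>2))"
proof (intro allI impI, goal_cases)
  case (1 t)
  then have t: "t \<ge> 0" and t0: "t \<in> {0..}" by simp_all
  have rot: "rotation_matrix (R1 \<tau>)" "rotation_matrix (R2 \<tau>)" "rotation_matrix (Qd \<tau>)"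
    if "\<tau> \<in> {0..}" for \<tau>
    using that R1_SO3 R2_SO3 Qd_SO3 rotation_matrix_SO3 by auto
  note los = line_of_sight_frame[OF noncol]
  {
    fix \<tau> :: real assume "\<tau> \<in> {0..}"
    note los(4,5)[OF rot(1,2)[OF this]] los(6)[OF rot(2,1)[OF this]]
  }
  note reduce = this
  note props = los_pair_properties[OF R1_kin[OF t] R2_kin[OF t] Qd_kin[OF t] rot[OF t0] Od12[OF t]
      Od1_bd[OF t] Od2_bd[OF t] los(1-3) ka_pos kb_pos reduce t0]
  show ?case
    unfolding Let_def using props by simp
qed

end
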